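(* Let $N_{\mathsf s}\ge1$ be a fixed integer, $\beta\in(0,\infty)$, and for each integer $N_{\mathsf h}\ge1$ set $N=N_{\mathsf s}N_{\mathsf h}$ and let $K=K_N$ be a positive integer with $K_N/N\to\beta$ as $N_{\mathsf h}\to\infty$. Let $\boldsymbol{S}\in\mathbb{R}^{N\times K}$ have independent columns, each an $(N_{\mathsf s},N_{\mathsf h})$-sequence. Then the normalized rank $r_N:=\frac1N\operatorname{rank}\boldsymbol{S}$ satisfies, in probability, the asymptotic upper bound \[ r\le \min\{\beta,\,1-e^{-N_{\mathsf s}\beta}\}, \] that is, for every $\varepsilon>0$, $\Pr\big(r_N>\min\{\beta,1-e^{-N_{\mathsf s}\beta}\}+\varepsilon\big)\to0$ as $N\to\infty$.
   Context: An $(N_{\mathsf s},N_{\mathsf h})$-sequence is a random vector $\boldsymbol{s}\in\mathbb{R}^N$, $N=N_{\mathsf s}N_{\mathsf h}$, such that for each $m=1,\dots,N_{\mathsf s}$ the block $(s_{1+(m-1)N_{\mathsf h}},\dots,s_{mN_{\mathsf h}})$ has exactly one nonzero entry, whose position within the block is uniform and whose value is $\pm1/\sqrt{N_{\mathsf s}}$ with equal probability, all these choices being independent across blocks (so $\|\boldsymbol{s}\|=1$). *)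

theory Defs
  imports "HOL-Probability.Probability" "Jordan_Normal_Form.DL_Rank"
begin

definition mrank :: "nat \<Rightarrow> real mat \<Rightarrow> nat" where
  "mrank Nrow A = vec_space.rank Nrow A"

text \<open>Raw randomness of one (Ns,Nh)-sequence: for each block m < Ns, a uniformly chosen
  position p in {0..<Nh} and an independent uniform sign (True = +, False = -);
  blocks are independent.\<close>
definition seq_choice_pmf :: "nat \<Rightarrow> nat \<Rightarrow> (nat \<Rightarrow> nat \<times> bool) pmf" where
  "seq_choice_pmf Ns Nh = Pi_pmf {..<Ns} (0, True) (\<lambda>_. pmf_of_set ({..<Nh} \<times> UNIV))"

text \<open>The vector in R^N, N = Ns*Nh (0-based indices), determined by the choices:
  entry i = m*Nh + p is \<plusminus>1/sqrt Ns if p is the chosen position in block m, else 0.\<close>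
definition seq_vec :: "nat \<Rightarrow> nat \<Rightarrow> (nat \<Rightarrow> nat \<times> bool) \<Rightarrow> real vec" where
  "seq_vec Ns Nh c = vec (Ns * Nh) (\<lambda>i.
      if i mod Nh = fst (c (i div Nh))
      then (if snd (c (i div Nh)) then 1 else -1) / sqrt (real Ns) else 0)"

definition seq_pmf :: "nat \<Rightarrow> nat \<Rightarrow> real vec pmf" where
  "seq_pmf Ns Nh = map_pmf (seq_vec Ns Nh) (seq_choice_pmf Ns Nh)"

definition seq_matrix_pmf :: "nat \<Rightarrow> nat \<Rightarrow> nat \<Rightarrow> real mat pmf" where
  "seq_matrix_pmf Ns Nh K =
     map_pmf (\<lambda>cs. mat (Ns * Nh) K (\<lambda>(i, j). cs j $ i))
       (Pi_pmf {..<K} (0\<^sub>v (Ns * Nh)) (\<lambda>_. seq_pmf Ns Nh))"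

end

theory Submission
  imports Defs "HOL-Real_Asymp.Real_Asymp"
begin

text \<open>
  Deleting the zero rows of \<open>S\<close> does not change its rank, so \<open>rank S \<le> N - Z\<close> where \<open>Z\<close>
  counts the zero rows; trivially also \<open>rank S \<le> K\<close>. Row \<open>a\<close> is zero iff none of the \<open>K\<close>
  independent columns hits position \<open>a\<close>, which happens with probability
  \<open>q = (1 - 1/N\<^sub>h)\<^sup>K \<rightarrow> exp (- N\<^sub>s \<beta>)\<close>, so \<open>E Z = N q\<close>. Two distinct positions
  are both missed by one column with probability at most \<open>(1 - 1/N\<^sub>h)\<^sup>2\<close> (Bernoulli's
  inequality applied blockwise), hence the zero-row events are pairwise negatively
  correlated, \<open>Var Z \<le> N q\<close>, and Chebyshev's inequality shows \<open>Z \<ge> N q - o(N)\<close> with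
  probability tending to one.
\<close>

definition restrict_rows :: "nat \<Rightarrow> nat \<Rightarrow> 'a::field mat \<Rightarrow> nat set \<Rightarrow> 'a mat" where
  "restrict_rows n nc A R = mat n nc (\<lambda>(r, c). if r \<in> R then A $$ (r, c) else 0)"

lemma rank_restrict_rows_le_card:
  fixes A :: "'a::field mat"
  assumes "finite R"
  shows "vec_space.rank n (restrict_rows n nc A R) \<le> card R"
  using assms
proof (induction R rule: finite_induct)
  case empty
  have "restrict_rows n nc A {} = 0\<^sub>m n nc" by (auto simp: restrict_rows_def)
  then show ?case by (simp add: vec_space.rank_0I)
next
  case (insert i R)
  have split: "restrict_rows n nc A (insert i R) = restrict_rows n nc A R + restrict_rows n nc A {i}"
    using insert.hyps by (auto simp: restrict_rows_def)
  have "vec_space.rank n (restrict_rows n nc A {i}) \<le> 1"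
    by (rule vec_space.rank_le_1_product_entries[where f = "\<lambda>r. if r = i then 1 else 0"
          and g = "\<lambda>c. A $$ (i, c)" and nc = nc]) (auto simp: restrict_rows_def)
  moreover have "vec_space.rank n (restrict_rows n nc A (insert i R)) \<le>
      vec_space.rank n (restrict_rows n nc A R) + vec_space.rank n (restrict_rows n nc A {i})"
    unfolding split by (rule vec_space.rank_subadditive) (auto simp: restrict_rows_def)
  ultimately show ?case using insert by simp
qed

lemma rank_le_card_nonzero_rows:
  fixes A :: "'a::field mat"
  assumes "A \<in> carrier_mat n nc"
  shows "vec_space.rank n A \<le> card {r \<in> {..<n}. \<exists>c<nc. A $$ (r, c) \<noteq> 0}"
proof -
  have "A = restrict_rows n nc A {r \<in> {..<n}. \<exists>c<nc. A $$ (r, c) \<noteq> 0}"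
    using assms by (auto simp: restrict_rows_def intro!: eq_matI)
  then show ?thesis
    using rank_restrict_rows_le_card[of "{r \<in> {..<n}. \<exists>c<nc. A $$ (r, c) \<noteq> 0}" n nc A] by simp
qed

definition zero_row :: "nat \<Rightarrow> nat \<Rightarrow> real mat set" where
  "zero_row K a = {S. \<forall>j<K. S $$ (a, j) = 0}"

lemma mrank_le_nrows_minus_zero_rows:
  assumes "S \<in> carrier_mat N K"
  shows "real (mrank N S) \<le> real N - (\<Sum>a<N. indicator (zero_row K a) S)"
proof -
  define Z where "Z = {a \<in> {..<N}. S \<in> zero_row K a}"
  have Z_sub: "Z \<subseteq> {..<N}" by (auto simp: Z_def)
  then have "finite Z" by (rule finite_subset) simp
  have "{a \<in> {..<N}. \<exists>j<K. S $$ (a, j) \<noteq> 0} = {..<N} - Z"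
    by (auto simp: zero_row_def Z_def)
  then have "mrank N S \<le> N - card Z"
    using rank_le_card_nonzero_rows[OF assms] card_Diff_subset[OF \<open>finite Z\<close> Z_sub]
    unfolding mrank_def by simp
  moreover have "card Z \<le> N"
    using card_mono[OF _ Z_sub] by simp
  moreover have "(\<Sum>a<N. indicator (zero_row K a) S) = real (card Z)"
    by (simp add: indicator_def Z_def Int_def)
  ultimately show ?thesis
    by (simp add: of_nat_diff)
qed

lemma sum_indicator_squared:
  "(\<Sum>i\<in>I. indicator (A i) x)\<^sup>2 = (\<Sum>i\<in>I. \<Sum>j\<in>I. indicator (A i \<inter> A j) x :: real)"
  by (simp add: power2_eq_square sum_product indicator_inter_arith)

context prob_space
begin

lemma integrable_indicator_event [simp, intro]: "A \<in> events \<Longrightarrow> integrable M (indicat_real A)"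
  by (simp add: emeasure_eq_measure)

lemma integrable_sum_indicator_squared:
  assumes "\<And>i. i \<in> I \<Longrightarrow> A i \<in> events"
  shows "integrable M (\<lambda>x. (\<Sum>i\<in>I. indicator (A i) x :: real)\<^sup>2)"
  unfolding sum_indicator_squared using assms by (simp add: sets.Int)

lemma expectation_sum_indicator:
  fixes A :: "'i \<Rightarrow> 'a set" and q :: real
  assumes "\<And>i. i \<in> I \<Longrightarrow> A i \<in> events" "\<And>i. i \<in> I \<Longrightarrow> prob (A i) = q"
  shows "expectation (\<lambda>x. \<Sum>i\<in>I. indicator (A i) x) = card I * q"
  using assms by (subst Bochner_Integration.integral_sum) auto

lemma variance_sum_indicator_le:
  fixes A :: "'i \<Rightarrow> 'a set" and q :: real
  assumes "finite I" "\<And>i. i \<in> I \<Longrightarrow> A i \<in> events" "\<And>i. i \<in> I \<Longrightarrow> prob (A i) = q"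
    and "\<And>i j. i \<in> I \<Longrightarrow> j \<in> I \<Longrightarrow> i \<noteq> j \<Longrightarrow> prob (A i \<inter> A j) \<le> q\<^sup>2"
  shows "variance (\<lambda>x. \<Sum>i\<in>I. indicator (A i) x) \<le> card I * q"
proof -
  define Z where "Z = (\<lambda>x. \<Sum>i\<in>I. indicator (A i) x :: real)"
  have "expectation (\<lambda>x. (Z x)\<^sup>2) = (\<Sum>i\<in>I. \<Sum>j\<in>I. prob (A i \<inter> A j))"
    unfolding Z_def sum_indicator_squared using assms(2)
    by (simp add: Bochner_Integration.integral_sum Bochner_Integration.integrable_sum sets.Int)
  also have "\<dots> \<le> (\<Sum>i\<in>I. \<Sum>j\<in>I. q\<^sup>2 + (if i = j then q else 0))"
    using assms(3,4) by (intro sum_mono) (auto simp: zero_le_power2)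
  also have "\<dots> = (card I * q)\<^sup>2 + card I * q"
    using assms(1) by (simp add: sum.distrib power2_eq_square algebra_simps)
  finally have "expectation (\<lambda>x. (Z x)\<^sup>2) \<le> (card I * q)\<^sup>2 + card I * q" .
  moreover have "expectation Z = card I * q"
    unfolding Z_def using assms(2,3) by (rule expectation_sum_indicator)
  moreover have "integrable M Z" "integrable M (\<lambda>x. (Z x)\<^sup>2)"
    unfolding Z_def using assms(2) integrable_sum_indicator_squared[of I A] by auto
  ultimately have "variance Z \<le> card I * q"
    using variance_eq[of Z] by simp
  then show ?thesis
    by (simp add: Z_def)
qed

lemma prob_sum_indicator_deviation_le:
  fixes A :: "'i \<Rightarrow> 'a set" and q :: real
  assumes "finite I" "\<And>i. i \<in> I \<Longrightarrow> A i \<in> events" "\<And>i. i \<in> I \<Longrightarrow> prob (A i) = q"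
    and "\<And>i j. i \<in> I \<Longrightarrow> j \<in> I \<Longrightarrow> i \<noteq> j \<Longrightarrow> prob (A i \<inter> A j) \<le> q\<^sup>2"
    and "t > 0"
  shows "prob {x \<in> space M. t \<le> \<bar>(\<Sum>i\<in>I. indicator (A i) x) - card I * q\<bar>} \<le> card I * q / t\<^sup>2"
proof -
  define Z where "Z = (\<lambda>x. \<Sum>i\<in>I. indicator (A i) x :: real)"
  have "expectation Z = card I * q"
    unfolding Z_def using assms(2,3) by (rule expectation_sum_indicator)
  moreover have "prob {x \<in> space M. t \<le> \<bar>Z x - expectation Z\<bar>} \<le> variance Z / t\<^sup>2"
    using assms(2,5) integrable_sum_indicator_squared[of I A]
    by (intro Chebyshev_inequality) (auto simp: Z_def)
  moreover have "variance Z / t\<^sup>2 \<le> card I * q / t\<^sup>2"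
    unfolding Z_def using variance_sum_indicator_le[OF assms(1-4)]
    by (intro divide_right_mono) auto
  ultimately show ?thesis
    unfolding Z_def by simp
qed

end

lemma one_minus_inverse_power_tendsto_exp:
  fixes k :: "nat \<Rightarrow> nat"
  assumes "(\<lambda>n. real (k n) / real n) \<longlonglongrightarrow> c"
  shows "(\<lambda>n. (1 - 1 / real n) ^ k n) \<longlonglongrightarrow> exp (- c)"
proof -
  have "(\<lambda>n::nat. real n * ln (1 - 1 / real n)) \<longlonglongrightarrow> -1" by real_asymp
  with assms have "(\<lambda>n. exp (real (k n) / real n * (real n * ln (1 - 1 / real n))))
      \<longlonglongrightarrow> exp (c * -1)"
    by (intro tendsto_exp tendsto_mult)
  moreover have "eventually (\<lambda>n. exp (real (k n) / real n * (real n * ln (1 - 1 / real n)))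
      = (1 - 1 / real n) ^ k n) sequentially"
    using eventually_ge_at_top[of "2::nat"]
  proof eventually_elim
    case (elim n)
    then have "0 < 1 - 1 / real n" by (simp add: field_simps)
    then show ?case
      using elim by (simp add: powr_def mult.commute flip: powr_realpow)
  qed
  ultimately show ?thesis
    by (simp add: Lim_transform_eventually)
qed

lemma div_mod_less_of_less_mult:
  fixes a Ns Nh :: nat
  assumes "a < Ns * Nh"
  shows "a div Nh < Ns" "a mod Nh < Nh"
proof -
  have "Nh > 0" using assms by (cases Nh) auto
  then show "a div Nh < Ns" "a mod Nh < Nh"
    using assms by (auto simp: less_mult_imp_div_less mult.commute)
qed

lemma mult_add_eq_mult_add_iff:
  fixes m m' p p' Nh :: nat
  assumes "p < Nh" "p' < Nh"
  shows "m * Nh + p = m' * Nh + p' \<longleftrightarrow> m = m' \<and> p = p'"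
proof
  assume eq: "m * Nh + p = m' * Nh + p'"
  have "(m * Nh + p) div Nh = m" "(m * Nh + p) mod Nh = p"
    "(m' * Nh + p') div Nh = m'" "(m' * Nh + p') mod Nh = p'"
    using assms by simp_all
  then show "m = m' \<and> p = p'" using eq by metis
qed simp

lemma seq_vec_vanishes_on_iff:
  assumes "E \<subseteq> {..<Ns * Nh}"
  shows "(\<forall>i\<in>E. seq_vec Ns Nh c $ i = 0) \<longleftrightarrow>
    (\<forall>m<Ns. fst (c m) \<notin> {p \<in> {..<Nh}. m * Nh + p \<in> E})"
proof
  assume vanish: "\<forall>i\<in>E. seq_vec Ns Nh c $ i = 0"
  show "\<forall>m<Ns. fst (c m) \<notin> {p \<in> {..<Nh}. m * Nh + p \<in> E}"
  proof (intro allI impI notI)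
    fix m assume "m < Ns" "fst (c m) \<in> {p \<in> {..<Nh}. m * Nh + p \<in> E}"
    moreover define i where "i = m * Nh + fst (c m)"
    ultimately have "i \<in> E" "i < Ns * Nh" "i div Nh = m" "i mod Nh = fst (c m)"
      using assms by auto
    then show False
      using vanish \<open>m < Ns\<close> by (auto simp: seq_vec_def split: if_splits)
  qed
next
  assume avoid: "\<forall>m<Ns. fst (c m) \<notin> {p \<in> {..<Nh}. m * Nh + p \<in> E}"
  show "\<forall>i\<in>E. seq_vec Ns Nh c $ i = 0"
  proof
    fix i assume "i \<in> E"
    then have "i < Ns * Nh" using assms by auto
    note div_mod_less_of_less_mult[OF this]
    moreover have "i div Nh * Nh + i mod Nh \<in> E" using \<open>i \<in> E\<close> by simp
    ultimately have "fst (c (i div Nh)) \<noteq> i mod Nh" using avoid by auto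
    then show "seq_vec Ns Nh c $ i = 0" using \<open>i < Ns * Nh\<close> by (simp add: seq_vec_def)
  qed
qed

lemma prob_uniform_position_avoids:
  assumes "P \<subseteq> {..<Nh}" "Nh \<ge> 1"
  shows "measure_pmf.prob (pmf_of_set ({..<Nh} \<times> (UNIV :: bool set))) {x. fst x \<notin> P}
    = 1 - real (card P) / real Nh"
proof -
  have "finite P" using assms(1) finite_subset by blast
  have "(0, True) \<in> {..<Nh} \<times> (UNIV :: bool set)" using assms(2) by simp
  then have nonempty: "{..<Nh} \<times> (UNIV :: bool set) \<noteq> {}" by blast
  have "({..<Nh} \<times> UNIV) \<inter> {x. fst x \<notin> P} = ({..<Nh} - P) \<times> (UNIV :: bool set)" by auto
  moreover have "card ({..<Nh} - P) = Nh - card P"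
    using card_Diff_subset[OF \<open>finite P\<close> assms(1)] by simp
  moreover have "card P \<le> Nh" using card_mono[OF _ assms(1)] by simp
  ultimately show ?thesis
    using assms(2)
    by (simp add: measure_pmf_of_set[OF nonempty] card_cartesian_product of_nat_diff)
      (simp add: field_simps)
qed

lemma prob_seq_vanishes_on:
  assumes "E \<subseteq> {..<Ns * Nh}" "Nh \<ge> 1"
  shows "measure_pmf.prob (seq_pmf Ns Nh) {v. \<forall>i\<in>E. v $ i = 0} =
    (\<Prod>m<Ns. 1 - real (card {p \<in> {..<Nh}. m * Nh + p \<in> E}) / real Nh)"
proof -
  have "seq_vec Ns Nh -` {v. \<forall>i\<in>E. v $ i = 0} =
      Pi {..<Ns} (\<lambda>m. {x. fst x \<notin> {p \<in> {..<Nh}. m * Nh + p \<in> E}})"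
    using seq_vec_vanishes_on_iff[OF assms(1)] by (auto simp: Pi_def)
  then have "measure_pmf.prob (seq_pmf Ns Nh) {v. \<forall>i\<in>E. v $ i = 0} =
      measure_pmf.prob (seq_choice_pmf Ns Nh)
        (Pi {..<Ns} (\<lambda>m. {x. fst x \<notin> {p \<in> {..<Nh}. m * Nh + p \<in> E}}))"
    by (simp add: seq_pmf_def)
  also have "\<dots> = (\<Prod>m<Ns. measure_pmf.prob (pmf_of_set ({..<Nh} \<times> (UNIV :: bool set)))
      {x. fst x \<notin> {p \<in> {..<Nh}. m * Nh + p \<in> E}})"
    unfolding seq_choice_pmf_def by (rule measure_Pi_pmf_Pi) simp
  also have "\<dots> = (\<Prod>m<Ns. 1 - real (card {p \<in> {..<Nh}. m * Nh + p \<in> E}) / real Nh)"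
    using assms(2) by (intro prod.cong refl prob_uniform_position_avoids) auto
  finally show ?thesis .
qed

lemma card_eq_sum_card_blocks:
  fixes E :: "nat set" and Ns Nh :: nat
  assumes "E \<subseteq> {..<Ns * Nh}"
  shows "card E = (\<Sum>m<Ns. card {p \<in> {..<Nh}. m * Nh + p \<in> E})"
proof -
  define B where "B m = {p \<in> {..<Nh}. m * Nh + p \<in> E}" for m
  have "inj_on (\<lambda>(m, p). m * Nh + p) (SIGMA m:{..<Ns}. B m)"
  proof (rule inj_onI)
    fix x y assume "x \<in> (SIGMA m:{..<Ns}. B m)" "y \<in> (SIGMA m:{..<Ns}. B m)"
      and "(\<lambda>(m, p). m * Nh + p) x = (\<lambda>(m, p). m * Nh + p) y"
    then show "x = y"
      using mult_add_eq_mult_add_iff[of "snd x" Nh "snd y" "fst x" "fst y"]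
      by (auto simp: B_def split: prod.splits)
  qed
  moreover have "(\<lambda>(m, p). m * Nh + p) ` (SIGMA m:{..<Ns}. B m) = E"
  proof
    show "E \<subseteq> (\<lambda>(m, p). m * Nh + p) ` (SIGMA m:{..<Ns}. B m)"
    proof
      fix i assume "i \<in> E"
      then have "(i div Nh, i mod Nh) \<in> (SIGMA m:{..<Ns}. B m)"
        using div_mod_less_of_less_mult[of i Ns Nh] assms by (auto simp: B_def)
      then show "i \<in> (\<lambda>(m, p). m * Nh + p) ` (SIGMA m:{..<Ns}. B m)"
        by (rule rev_image_eqI) simp
    qed
  qed (auto simp: B_def)
  ultimately have "card E = card (SIGMA m:{..<Ns}. B m)"
    by (metis card_image)
  also have "\<dots> = (\<Sum>m<Ns. card (B m))"
    by (simp add: B_def)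
  finally show ?thesis by (simp add: B_def)
qed

lemma prob_seq_vanishes_on_le:
  assumes "E \<subseteq> {..<Ns * Nh}" "Nh \<ge> 1"
  shows "measure_pmf.prob (seq_pmf Ns Nh) {v. \<forall>i\<in>E. v $ i = 0} \<le> (1 - 1 / real Nh) ^ card E"
proof -
  define k where "k m = card {p \<in> {..<Nh}. m * Nh + p \<in> E}" for m
  have "1 - real (k m) / real Nh \<le> (1 - 1 / real Nh) ^ k m" for m
    using Bernoulli_inequality[of "- 1 / real Nh" "k m"] assms(2) by simp
  moreover have "0 \<le> 1 - real (k m) / real Nh" for m
    using card_mono[of "{..<Nh}" "{p \<in> {..<Nh}. m * Nh + p \<in> E}"] assms(2)
    by (auto simp: k_def field_simps)
  ultimately have "(\<Prod>m<Ns. 1 - real (k m) / real Nh) \<le> (\<Prod>m<Ns. (1 - 1 / real Nh) ^ k m)"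
    by (intro prod_mono) auto
  also have "\<dots> = (1 - 1 / real Nh) ^ card E"
    by (simp add: power_sum card_eq_sum_card_blocks[OF assms(1)] k_def)
  finally show ?thesis
    by (simp add: prob_seq_vanishes_on[OF assms] k_def)
qed

lemma prob_seq_entry_zero:
  assumes "a < Ns * Nh"
  shows "measure_pmf.prob (seq_pmf Ns Nh) {v. v $ a = 0} = 1 - 1 / real Nh"
proof -
  note a_block = div_mod_less_of_less_mult[OF assms]
  have "m * Nh + p = a \<longleftrightarrow> m = a div Nh \<and> p = a mod Nh" if "p < Nh" for m p
    using mult_add_eq_mult_add_iff[OF that a_block(2), of m "a div Nh"] by simp
  then have "{p \<in> {..<Nh}. m * Nh + p \<in> {a}} = (if m = a div Nh then {a mod Nh} else {})" for m
    using a_block(2) by auto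
  then have "(\<Prod>m<Ns. 1 - real (card {p \<in> {..<Nh}. m * Nh + p \<in> {a}}) / real Nh) =
      (\<Prod>m<Ns. if m = a div Nh then 1 - 1 / real Nh else 1)"
    by (intro prod.cong) simp_all
  also have "\<dots> = 1 - 1 / real Nh"
    using a_block(1) by simp
  finally show ?thesis
    using prob_seq_vanishes_on[of "{a}" Ns Nh] assms a_block(2) by simp
qed

lemma prob_seq_matrix_zero_rows:
  assumes "E \<subseteq> {..<Ns * Nh}"
  shows "measure_pmf.prob (seq_matrix_pmf Ns Nh K) {S. \<forall>a\<in>E. S \<in> zero_row K a} =
    measure_pmf.prob (seq_pmf Ns Nh) {v. \<forall>i\<in>E. v $ i = 0} ^ K"
proof -
  have "(\<lambda>cs. mat (Ns * Nh) K (\<lambda>(i, j). cs j $ i)) -` {S. \<forall>a\<in>E. S \<in> zero_row K a} =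
      Pi {..<K} (\<lambda>_. {v. \<forall>i\<in>E. v $ i = 0})"
    using assms by (fastforce simp: zero_row_def Pi_def subset_iff)
  then show ?thesis
    by (simp add: seq_matrix_pmf_def measure_Pi_pmf_Pi)
qed

lemma set_pmf_seq_matrix_pmf: "set_pmf (seq_matrix_pmf Ns Nh K) \<subseteq> carrier_mat (Ns * Nh) K"
  by (auto simp: seq_matrix_pmf_def)

lemma prob_seq_matrix_rank_exceeds:
  fixes Ns Nh K :: nat and t :: real
  assumes "Nh \<ge> 1" "t > 0"
  defines "N \<equiv> Ns * Nh" and "q \<equiv> (1 - 1 / real Nh) ^ K"
  shows "measure_pmf.prob (seq_matrix_pmf Ns Nh K) {S. real N * (1 - q) + t < real (mrank N S)}
    \<le> real N * q / t\<^sup>2"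
proof -
  let ?M = "seq_matrix_pmf Ns Nh K"
  define Z where "Z S = (\<Sum>a<N. indicator (zero_row K a) S :: real)" for S
  have row_prob: "measure_pmf.prob ?M (zero_row K a) = q" if "a < N" for a
    using prob_seq_matrix_zero_rows[of "{a}" Ns Nh K] prob_seq_entry_zero[of a Ns Nh] that
    by (simp add: N_def q_def)
  have pair_prob: "measure_pmf.prob ?M (zero_row K a \<inter> zero_row K b) \<le> q\<^sup>2"
    if "a < N" "b < N" "a \<noteq> b" for a b
  proof -
    have "measure_pmf.prob (seq_pmf Ns Nh) {v. \<forall>i\<in>{a, b}. v $ i = 0} \<le> (1 - 1 / real Nh)\<^sup>2"
      using prob_seq_vanishes_on_le[of "{a, b}" Ns Nh] that assms(1) by (simp add: N_def power2_eq_square)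
    then have "measure_pmf.prob (seq_pmf Ns Nh) {v. \<forall>i\<in>{a, b}. v $ i = 0} ^ K
        \<le> ((1 - 1 / real Nh)\<^sup>2) ^ K"
      by (rule power_mono) simp
    also have "\<dots> = q\<^sup>2"
      by (simp add: q_def mult.commute flip: power_mult)
    finally have "measure_pmf.prob (seq_pmf Ns Nh) {v. \<forall>i\<in>{a, b}. v $ i = 0} ^ K \<le> q\<^sup>2" .
    moreover have "{S. \<forall>c\<in>{a, b}. S \<in> zero_row K c} = zero_row K a \<inter> zero_row K b" by auto
    ultimately show ?thesis
      using prob_seq_matrix_zero_rows[of "{a, b}" Ns Nh K] that by (simp add: N_def)
  qed
  have deviation: "measure_pmf.prob ?M {S. t \<le> \<bar>Z S - real N * q\<bar>} \<le> real N * q / t\<^sup>2"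
    using measure_pmf.prob_sum_indicator_deviation_le[of "{..<N}" "zero_row K" ?M q t]
      row_prob pair_prob assms(2) by (simp add: Z_def)
  have "{S. real N * (1 - q) + t < real (mrank N S)} \<inter> set_pmf ?M \<subseteq> {S. t \<le> \<bar>Z S - real N * q\<bar>}"
  proof clarify
    fix S assume "real N * (1 - q) + t < real (mrank N S)" "S \<in> set_pmf ?M"
    moreover have "real (mrank N S) \<le> real N - Z S"
      unfolding Z_def N_def
      by (rule mrank_le_nrows_minus_zero_rows) (use set_pmf_seq_matrix_pmf \<open>S \<in> set_pmf ?M\<close> in blast)
    ultimately show "t \<le> \<bar>Z S - real N * q\<bar>" by (simp add: algebra_simps)
  qed
  then have "measure_pmf.prob ?M {S. real N * (1 - q) + t < real (mrank N S)}
      \<le> measure_pmf.prob ?M {S. t \<le> \<bar>Z S - real N * q\<bar>}"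
    by (metis measure_Int_set_pmf measure_pmf.finite_measure_mono sets_measure_pmf UNIV_I)
  with deviation show ?thesis by linarith
qed
lemma prob_seq_matrix_rank_ratio_exceeds:
  fixes Ns Nh K :: nat and \<beta> e \<epsilon> :: real
  assumes "Nh \<ge> 1" "Ns \<ge> 1" "\<epsilon> > 0"
    and "real K / real (Ns * Nh) < \<beta> + \<epsilon>" "e - \<epsilon> / 2 < (1 - 1 / real Nh) ^ K"
  shows "measure_pmf.prob (seq_matrix_pmf Ns Nh K)
      {S. real (mrank (Ns * Nh) S) / real (Ns * Nh) > min \<beta> (1 - e) + \<epsilon>}
    \<le> 4 / (\<epsilon>\<^sup>2 * real (Ns * Nh))"
proof -
  let ?M = "seq_matrix_pmf Ns Nh K"
  define N where "N = Ns * Nh"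
  define q where "q = (1 - 1 / real Nh) ^ K"
  have "real N > 0" using assms(1,2) by (simp add: N_def)
  have "q \<le> 1" using assms(1) by (simp add: q_def power_le_one)
  have "{S. real (mrank N S) / real N > min \<beta> (1 - e) + \<epsilon>} \<inter> set_pmf ?M
      \<subseteq> {S. real N * (1 - q) + \<epsilon> * real N / 2 < real (mrank N S)}"
  proof clarify
    fix S assume S: "real (mrank N S) / real N > min \<beta> (1 - e) + \<epsilon>" "S \<in> set_pmf ?M"
    have "mrank N S \<le> K"
      using S(2) set_pmf_seq_matrix_pmf vec_space.rank_le_nc unfolding mrank_def N_def by blast
    then have "real (mrank N S) / real N \<le> real K / real N"
      by (simp add: divide_right_mono)
    with S(1) assms(4,5) have "real (mrank N S) / real N > 1 - q + \<epsilon> / 2"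
      by (auto simp: N_def q_def min_def split: if_splits)
    then show "real N * (1 - q) + \<epsilon> * real N / 2 < real (mrank N S)"
      using \<open>real N > 0\<close> by (simp add: field_simps)
  qed
  then have "measure_pmf.prob ?M {S. real (mrank N S) / real N > min \<beta> (1 - e) + \<epsilon>}
      \<le> measure_pmf.prob ?M {S. real N * (1 - q) + \<epsilon> * real N / 2 < real (mrank N S)}"
    by (metis measure_Int_set_pmf measure_pmf.finite_measure_mono sets_measure_pmf UNIV_I)
  also have "\<dots> \<le> real N * q / (\<epsilon> * real N / 2)\<^sup>2"
    using prob_seq_matrix_rank_exceeds[of Nh "\<epsilon> * real N / 2" Ns K] assms(1,3) \<open>real N > 0\<close>
    by (simp add: N_def q_def)
  also have "\<dots> \<le> 4 / (\<epsilon>\<^sup>2 * real N)"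
    using \<open>q \<le> 1\<close> \<open>real N > 0\<close> assms(3) by (simp add: field_simps power2_eq_square)
  finally show ?thesis by (simp add: N_def)
qed

lemma prob_seq_matrix_rank_ratio_exceeds_tendsto_zero:
  fixes Ns :: nat and K :: "nat \<Rightarrow> nat" and \<beta> e \<epsilon> :: real
  assumes "Ns \<ge> 1" "(\<lambda>n. real (K n) / real (Ns * n)) \<longlonglongrightarrow> \<beta>"
    and "(\<lambda>n. (1 - 1 / real n) ^ K n) \<longlonglongrightarrow> e" and "\<epsilon> > 0"
  shows "(\<lambda>n. measure_pmf.prob (seq_matrix_pmf Ns n (K n))
      {S. real (mrank (Ns * n) S) / real (Ns * n) > min \<beta> (1 - e) + \<epsilon>}) \<longlonglongrightarrow> 0"
proof (rule tendsto_sandwich[OF _ _ tendsto_const])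
  have "eventually (\<lambda>n. real (K n) / real (Ns * n) < \<beta> + \<epsilon>) sequentially"
    using order_tendstoD(2)[OF assms(2)] assms(4) by simp
  moreover have "eventually (\<lambda>n. e - \<epsilon> / 2 < (1 - 1 / real n) ^ K n) sequentially"
    using order_tendstoD(1)[OF assms(3)] assms(4) by simp
  ultimately show "eventually (\<lambda>n. measure_pmf.prob (seq_matrix_pmf Ns n (K n))
        {S. real (mrank (Ns * n) S) / real (Ns * n) > min \<beta> (1 - e) + \<epsilon>}
      \<le> 4 / (\<epsilon>\<^sup>2 * real (Ns * n))) sequentially"
    using eventually_ge_at_top[of "1::nat"]
  proof eventually_elim
    case (elim n)
    then show ?case
      using assms(1,4) by (intro prob_seq_matrix_rank_ratio_exceeds) auto
  qed
  have "(\<lambda>n. 4 / (\<epsilon>\<^sup>2 * real Ns) * inverse (real n)) \<longlonglongrightarrow> 0"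
    by (rule tendsto_mult_right_zero[OF lim_inverse_n])
  moreover have "(\<lambda>n. 4 / (\<epsilon>\<^sup>2 * real Ns) * inverse (real n)) = (\<lambda>n. 4 / (\<epsilon>\<^sup>2 * real (Ns * n)))"
    by (simp add: field_simps)
  ultimately show "(\<lambda>n. 4 / (\<epsilon>\<^sup>2 * real (Ns * n))) \<longlonglongrightarrow> 0"
    by simp
qed simp

theorem theorem2:
  fixes Ns :: nat and \<beta> :: real and K :: "nat \<Rightarrow> nat"
  assumes "Ns \<ge> 1"
    and "\<beta> > 0"
    and "\<And>Nh. Nh \<ge> 1 \<Longrightarrow> K Nh > 0"
    and "(\<lambda>Nh. real (K Nh) / real (Ns * Nh)) \<longlonglongrightarrow> \<beta>"
  shows "\<And>\<epsilon>. \<epsilon> > 0 \<Longrightarrow>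
    (\<lambda>Nh. measure_pmf.prob (seq_matrix_pmf Ns Nh (K Nh))
        {S. real (mrank (Ns * Nh) S) / real (Ns * Nh) > min \<beta> (1 - exp (- real Ns * \<beta>)) + \<epsilon>})
      \<longlonglongrightarrow> 0"
proof -
  have "(\<lambda>n. real Ns * (real (K n) / real (Ns * n))) \<longlonglongrightarrow> real Ns * \<beta>"
    using assms(4) by (rule tendsto_mult_left)
  then have "(\<lambda>n. real (K n) / real n) \<longlonglongrightarrow> real Ns * \<beta>"
    using assms(1) by simp
  then have "(\<lambda>n. (1 - 1 / real n) ^ K n) \<longlonglongrightarrow> exp (- real Ns * \<beta>)"
    using one_minus_inverse_power_tendsto_exp by simp
  then show "?thesis \<epsilon>" if "\<epsilon> > 0" for \<epsilon>
    using assms(1,4) that by (intro prob_seq_matrix_rank_ratio_exceeds_tendsto_zero)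
qed

end
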